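(* Let $k\geq 0$ and $t\geq 2$ be integers and let $T$ be a tournament with $n$ vertices and irregularity $i(T)\leq k$. If $n\geq 6t+5k-3$, then $\kappa_{w}^{*}(T)\geq t+1$; that is, $T$ is $\omega^{*}$-weakly connected for every $1\leq\omega\leq t+1$.
   Context: A tournament is a digraph in which each pair of distinct vertices is joined by exactly one arc. The irregularity $i(T)$ of a tournament $T$ is $\max_{x\in V(T)}|d^{+}(x)-d^{-}(x)|$, where $d^{+},d^{-}$ denote out- and in-degree. For distinct vertices $u,v$ of a digraph $D$, a weak $k^{*}$-container between $u$ and $v$ is a set of $k$ internally disjoint paths, each of which is either a $(u,v)$-path or a $(v,u)$-path (different paths may have different directions), whose union contains every vertex of $D$. $D$ is $k^{*}$-weakly connected if there is a weak $k^{*}$-container between every two distinct vertices of $D$. If $D$ is $1^{*}$-weakly connected, the weak spanning connectivity $\kappa_{w}^{*}(D)$ is the largest integer $k$ such that $D$ is $\omega^{*}$-weakly connected for all $1\leq\omega\leq k$. *)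

theory Defs
  imports Main
begin

definition tournament :: "'a set \<Rightarrow> ('a \<Rightarrow> 'a \<Rightarrow> bool) \<Rightarrow> bool" where
  "tournament V A \<longleftrightarrow> finite V
     \<and> (\<forall>x y. A x y \<longrightarrow> x \<in> V \<and> y \<in> V \<and> x \<noteq> y)
     \<and> (\<forall>x\<in>V. \<forall>y\<in>V. x \<noteq> y \<longrightarrow> (A x y \<longleftrightarrow> \<not> A y x))"

definition out_degree :: "'a set \<Rightarrow> ('a \<Rightarrow> 'a \<Rightarrow> bool) \<Rightarrow> 'a \<Rightarrow> nat" where
  "out_degree V A x = card {y \<in> V. A x y}"

definition in_degree :: "'a set \<Rightarrow> ('a \<Rightarrow> 'a \<Rightarrow> bool) \<Rightarrow> 'a \<Rightarrow> nat" where
  "in_degree V A x = card {y \<in> V. A y x}"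

definition irregularity :: "'a set \<Rightarrow> ('a \<Rightarrow> 'a \<Rightarrow> bool) \<Rightarrow> nat" where
  "irregularity V A = Max (insert 0
     ((\<lambda>x. nat \<bar>int (out_degree V A x) - int (in_degree V A x)\<bar>) ` V))"

definition is_path :: "'a set \<Rightarrow> ('a \<Rightarrow> 'a \<Rightarrow> bool) \<Rightarrow> 'a \<Rightarrow> 'a \<Rightarrow> 'a list \<Rightarrow> bool" where
  "is_path V A u v p \<longleftrightarrow> p \<noteq> [] \<and> hd p = u \<and> last p = v \<and> distinct p
     \<and> set p \<subseteq> V \<and> (\<forall>i. Suc i < length p \<longrightarrow> A (p ! i) (p ! Suc i))"

definition interior :: "'a list \<Rightarrow> 'a set" where
  "interior p = set (butlast (tl p))"

definition weak_container :: "'a set \<Rightarrow> ('a \<Rightarrow> 'a \<Rightarrow> bool) \<Rightarrow> nat \<Rightarrow> 'a \<Rightarrow> 'a \<Rightarrow> 'a list list \<Rightarrow> bool" where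
  "weak_container V A k u v Ps \<longleftrightarrow> length Ps = k \<and> distinct Ps
     \<and> (\<forall>p\<in>set Ps. is_path V A u v p \<or> is_path V A v u p)
     \<and> (\<forall>i<k. \<forall>j<k. i \<noteq> j \<longrightarrow> interior (Ps ! i) \<inter> interior (Ps ! j) = {})
     \<and> (\<Union>p\<in>set Ps. set p) = V"

definition weakly_connected_star :: "'a set \<Rightarrow> ('a \<Rightarrow> 'a \<Rightarrow> bool) \<Rightarrow> nat \<Rightarrow> bool" where
  "weakly_connected_star V A k \<longleftrightarrow>
     (\<forall>u\<in>V. \<forall>v\<in>V. u \<noteq> v \<longrightarrow> (\<exists>Ps. weak_container V A k u v Ps))"

end

(*
  Fix an arc u -> v; containers are symmetric in u and v.  Every other vertex is joined to u
  and v in one of four ways, and since all degrees are within k/2 of (n - 1)/2, a vertex set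
  whose out-arcs (or in-arcs) stay inside it up to a few exceptional vertices must have
  nearly n - k elements.

  For omega >= 2, take [u, v] together with omega - 1 further u-v or v-u paths having one or
  two interior vertices each; the counting argument shows that such short paths exist as long
  as few vertices are used, which is where n >= 6t + 5k - 3 enters.  The remaining vertices
  are then absorbed one at a time by inserting them into one of the paths; if no vertex
  could be absorbed, the uncovered vertices would form a closed set that is too small.

  For omega = 1, the same count shows that the tournament on V - {u, v} is strong, so it has
  a Hamiltonian cycle (Camion).  Cutting the cycle at a suitable place and attaching u and v
  at the ends gives a spanning path between u and v.  If no place is suitable, the cycle
  alternates between the vertices on u -> x -> v and those on v -> x -> u, and a rerouting
  near four consecutive vertices of the cycle gives a spanning path whose ends lie in the
  same class, which again can be closed up.
*)

theory Submission
  imports Defs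
begin

section \<open>Inserting a vertex into a path\<close>

lemma split_at_exit:
  assumes "\<exists>y\<in>set l. Q y"
  shows "\<exists>l1 l2. l = l1 @ l2 \<and> l1 \<noteq> [] \<and> Q (last l1) \<and> (l2 = [] \<or> \<not> Q (hd l2))"
  using assms
proof (induction l)
  case Nil
  then show ?case by simp
next
  case (Cons y ys)
  show ?case
  proof (cases "\<exists>w\<in>set ys. Q w")
    case True
    with Cons.IH obtain l1 l2 where "ys = l1 @ l2" "l1 \<noteq> []" "Q (last l1)" "l2 = [] \<or> \<not> Q (hd l2)"
      by blast
    then show ?thesis by (intro exI[of _ "y # l1"] exI[of _ l2]) auto
  next
    case False
    with Cons.prems show ?thesis by (intro exI[of _ "[y]"] exI[of _ ys]) (cases ys, auto)
  qed
qed

lemma successively_appendD: "successively R (xs @ ys) \<Longrightarrow> successively R xs"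
  by (simp add: successively_append_iff)

lemma successively_insert:
  assumes "successively R (l1 @ l2)"
    and "\<exists>a\<in>set l1. R a z" and "\<exists>b\<in>set l2. R z b"
    and "\<forall>w\<in>set (l1 @ l2). R w z \<longleftrightarrow> \<not> R z w"
  shows "\<exists>m1 m2. l1 @ l2 = m1 @ m2 \<and> m1 \<noteq> [] \<and> m2 \<noteq> [] \<and> successively R (m1 @ z # m2)"
  using assms
proof (induction l2 arbitrary: l1)
  case Nil
  then show ?case by simp
next
  case (Cons y ys)
  show ?case
  proof (cases "R z y")
    case True
    from split_at_exit[OF Cons.prems(2)] obtain m1 m2 where
      m: "l1 = m1 @ m2" "m1 \<noteq> []" "R (last m1) z" "m2 = [] \<or> \<not> R (hd m2) z" by blast
    have "R z (hd (m2 @ y # ys))"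
      using m Cons.prems(4) True by (cases m2) auto
    moreover have "successively R (m1 @ m2 @ y # ys)" using Cons.prems(1) m by simp
    ultimately have "successively R (m1 @ z # (m2 @ y # ys))"
      using m by (auto simp: successively_append_iff successively_Cons)
    then show ?thesis using m by (intro exI[of _ m1] exI[of _ "m2 @ y # ys"]) auto
  next
    case False
    then have "R y z" "\<exists>b\<in>set ys. R z b" using Cons.prems(3,4) by auto
    then obtain m1 m2 where "(l1 @ [y]) @ ys = m1 @ m2" "m1 \<noteq> []" "m2 \<noteq> []"
        "successively R (m1 @ z # m2)"
      using Cons.IH[of "l1 @ [y]"] Cons.prems(1,4) by auto
    then show ?thesis by auto
  qed
qed

lemma successively_of_all_splits:
  assumes "\<And>l1 l2. l = l1 @ l2 \<Longrightarrow> l1 \<noteq> [] \<Longrightarrow> l2 \<noteq> [] \<Longrightarrow> R (last l1) (hd l2)"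
  shows "successively R l"
  using assms
proof (induction l rule: induct_list012)
  case (3 a b rest)
  have "R a b" using "3.prems"[of "[a]"] by simp
  moreover have "successively R (b # rest)"
  proof (rule "3.IH"(2))
    fix l1 l2 assume "b # rest = l1 @ l2" "l1 \<noteq> []" "l2 \<noteq> []"
    then show "R (last l1) (hd l2)" using "3.prems"[of "a # l1" l2] by simp
  qed

  ultimately show ?case by simp
qed simp_all

lemma successively_closed_last:
  assumes "successively R l" and "\<And>a b. a \<in> set l \<Longrightarrow> b \<in> set l \<Longrightarrow> R a b \<Longrightarrow> a \<in> S \<Longrightarrow> b \<in> S"
    and "x \<in> set l" "x \<in> S"
  shows "last l \<in> S"
  using assms
proof (induction l arbitrary: x rule: induct_list012)
  case (3 a b rest)
  have "\<exists>y\<in>set (b # rest). y \<in> S"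
    using "3.prems" by (cases "x = a") auto
  then obtain y where "y \<in> set (b # rest)" "y \<in> S" by blast
  then have "last (b # rest) \<in> S" using "3.prems"(1,2) by (intro "3.IH"(2)[of y]) auto
  then show ?case by simp
qed simp_all

lemma successively_closed_all:
  assumes "successively R l" and "\<And>a b. a \<in> set l \<Longrightarrow> b \<in> set l \<Longrightarrow> R a b \<Longrightarrow> a \<in> S \<Longrightarrow> b \<in> S"
    and "l \<noteq> []" "hd l \<in> S"
  shows "set l \<subseteq> S"
  using assms
proof (induction l rule: induct_list012)
  case (3 a b rest)
  then have "b \<in> S" by auto
  then show ?case using "3.IH"(2) "3.prems" by auto
qed simp_all

lemma cyclically_closed:
  assumes "successively R l" "R (last l) (hd l)"
    and "\<And>a b. a \<in> set l \<Longrightarrow> b \<in> set l \<Longrightarrow> R a b \<Longrightarrow> a \<in> S \<Longrightarrow> b \<in> S"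
    and "x \<in> set l" "x \<in> S"
  shows "set l \<subseteq> S"
proof -
  have "l \<noteq> []" using assms(4) by auto
  have "last l \<in> S" using successively_closed_last[OF assms(1) assms(3-5)] .
  then show ?thesis
    using assms(2) assms(3)[of "last l" "hd l"] \<open>l \<noteq> []\<close>
      successively_closed_all[OF assms(1,3) \<open>l \<noteq> []\<close>] by simp
qed

section \<open>Tournaments and Camion's theorem\<close>

lemma is_path_iff:
  "is_path V A a b p \<longleftrightarrow>
     p \<noteq> [] \<and> hd p = a \<and> last p = b \<and> distinct p \<and> set p \<subseteq> V \<and> successively A p"
  unfolding is_path_def successively_conv_nth by blast

lemma tournament_converse: "tournament V A \<Longrightarrow> tournament V (\<lambda>x y. A y x)"
  unfolding tournament_def by blast

locale tournament_digraph =
  fixes V :: "'a set" and A :: "'a \<Rightarrow> 'a \<Rightarrow> bool"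
  assumes tournament: "tournament V A"
begin

lemma finite_V: "finite V"
  using tournament unfolding tournament_def by blast

lemma arc_vertices: "A x y \<Longrightarrow> x \<in> V \<and> y \<in> V \<and> x \<noteq> y"
  using tournament unfolding tournament_def by blast

lemma arc_total: "x \<in> V \<Longrightarrow> y \<in> V \<Longrightarrow> x \<noteq> y \<Longrightarrow> A x y \<or> A y x"
  using tournament unfolding tournament_def by blast

lemma arc_asym: "A x y \<Longrightarrow> \<not> A y x"
  using tournament unfolding tournament_def by blast

lemma card_out_plus_in_within:
  assumes "S \<subseteq> V" "x \<in> S"
  shows "card {y\<in>S. A x y} + card {y\<in>S. A y x} = card S - 1"
proof -
  have "finite S" using assms(1) finite_V finite_subset by blast
  have "{y\<in>S. A x y} \<union> {y\<in>S. A y x} = S - {x}"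
    using assms arc_total[of x] arc_vertices by blast
  moreover have "{y\<in>S. A x y} \<inter> {y\<in>S. A y x} = {}"
    using arc_asym by blast
  ultimately show ?thesis
    using card_Un_disjoint[of "{y\<in>S. A x y}" "{y\<in>S. A y x}"] \<open>finite S\<close> assms(2) by simp
qed

lemma out_plus_in_degree: "x \<in> V \<Longrightarrow> out_degree V A x + in_degree V A x = card V - 1"
  unfolding out_degree_def in_degree_def by (rule card_out_plus_in_within) auto

lemma sum_out_degrees_within:
  assumes "S \<subseteq> V"
  shows "2 * (\<Sum>x\<in>S. card {y\<in>S. A x y}) = card S * (card S - 1)"
proof -
  have "finite S" using assms finite_V finite_subset by blast
  have card_as_sum: "card {y\<in>S. P y} = (\<Sum>y\<in>S. if P y then 1 else 0)" for P
    using \<open>finite S\<close> by (simp add: sum.inter_filter[symmetric])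
  have "(\<Sum>x\<in>S. card {y\<in>S. A x y}) = (\<Sum>x\<in>S. card {y\<in>S. A y x})"
    unfolding card_as_sum by (rule sum.swap)
  moreover have "(\<Sum>x\<in>S. card {y\<in>S. A x y} + card {y\<in>S. A y x}) = card S * (card S - 1)"
    using card_out_plus_in_within[OF assms] by simp
  ultimately show ?thesis by (simp add: sum.distrib)
qed

lemma ex_low_out_degree_within:
  assumes "S \<subseteq> V" "S \<noteq> {}"
  shows "\<exists>x\<in>S. 2 * card {y\<in>S. A x y} + 1 \<le> card S"
proof (rule ccontr)
  assume "\<not> ?thesis"
  then have "(\<Sum>x\<in>S. card S) \<le> (\<Sum>x\<in>S. 2 * card {y\<in>S. A x y})"
    by (intro sum_mono) auto
  also have "\<dots> = card S * (card S - 1)"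
    using sum_out_degrees_within[OF assms(1)] by (simp add: sum_distrib_left)
  finally have "card S * card S \<le> card S * (card S - 1)" by simp
  moreover have "card S > 0"
    using assms finite_V finite_subset by (auto simp: card_gt_0_iff)
  ultimately show False by simp
qed

lemma ex_low_in_degree_within:
  assumes "S \<subseteq> V" "S \<noteq> {}"
  shows "\<exists>x\<in>S. 2 * card {y\<in>S. A y x} + 1 \<le> card S"
  using tournament_digraph.ex_low_out_degree_within[of V "\<lambda>x y. A y x"] assms
    tournament_converse[OF tournament] unfolding tournament_digraph_def by blast

lemma path_insert:
  assumes "is_path V A a b p" "z \<in> V" "z \<notin> set p" "p = p1 @ p2"
    and "\<exists>a'\<in>set p1. A a' z" "\<exists>b'\<in>set p2. A z b'"
  shows "\<exists>p'. is_path V A a b p' \<and> set p' = insert z (set p)"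
proof -
  have p: "successively A (p1 @ p2)" "distinct p" "set p \<subseteq> V" "hd p = a" "last p = b"
    using assms(1,4) by (auto simp: is_path_iff)
  have "\<forall>w\<in>set (p1 @ p2). A w z \<longleftrightarrow> \<not> A z w"
    using assms(2-4) p(3) arc_total arc_asym by blast
  then obtain m1 m2 where m: "p = m1 @ m2" "m1 \<noteq> []" "m2 \<noteq> []" "successively A (m1 @ z # m2)"
    using successively_insert[OF p(1) assms(5,6)] assms(4) by blast
  then show ?thesis
    using p assms(2,3) by (intro exI[of _ "m1 @ z # m2"]) (auto simp: is_path_iff hd_append)
qed

definition cycle_on :: "'a set \<Rightarrow> 'a list \<Rightarrow> bool" where
  "cycle_on S c \<longleftrightarrow> distinct c \<and> 3 \<le> length c \<and> set c \<subseteq> S \<and> successively A c \<and> A (last c) (hd c)"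

definition strong_on :: "'a set \<Rightarrow> bool" where
  "strong_on S \<longleftrightarrow> (\<forall>X. X \<subset> S \<longrightarrow> X \<noteq> {} \<longrightarrow> (\<exists>a\<in>X. \<exists>b\<in>S - X. A a b))"

lemma cycle_on_rotate1:
  assumes "cycle_on S c"
  shows "cycle_on S (rotate1 c)"
proof -
  have "3 \<le> length c" using assms unfolding cycle_on_def by blast
  then obtain x xs where c: "c = x # xs" "xs \<noteq> []"
    by (cases c) (auto simp: Suc_le_length_iff numeral_3_eq_3)
  then have "successively A (xs @ [x])" "A x (hd xs)"
    using assms unfolding cycle_on_def by (auto simp: successively_append_iff successively_Cons)
  then show ?thesis using assms c unfolding cycle_on_def by auto
qed

lemma cycle_on_rotate: "cycle_on S c \<Longrightarrow> cycle_on S (rotate n c)"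
  by (induction n) (auto intro: cycle_on_rotate1)

lemma cycle_on_insert:
  assumes c: "cycle_on S c" and S: "S \<subseteq> V" and z: "z \<in> S" "z \<notin> set c"
    and a: "a \<in> set c" "A a z" and b: "b \<in> set c" "A z b"
  shows "\<exists>c'. cycle_on S c' \<and> length c' = Suc (length c)"
proof -
  obtain j where j: "j < length c" "c ! j = b" using b by (auto simp: in_set_conv_nth)
  define l where "l = rotate j c"
  have "c \<noteq> []" using j by auto
  have l: "cycle_on S l" "hd l = b" "set l = set c" "length l = length c"
    using cycle_on_rotate[OF c] hd_rotate_conv_nth[OF \<open>c \<noteq> []\<close>, of j] j
    unfolding l_def by auto
  obtain l1 l2 where sp: "l = l1 @ l2" "l1 \<noteq> []" "A (last l1) z" "l2 = [] \<or> \<not> A (hd l2) z"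
    using split_at_exit[of l "\<lambda>w. A w z"] a l(3) by blast
  have "A z (hd l2)" if "l2 \<noteq> []"
    using sp that l(1,3) S z arc_total[of z "hd l2"] unfolding cycle_on_def by (cases l2) auto
  then have "successively A (l1 @ z # l2)"
    using l(1) sp unfolding cycle_on_def
    by (cases "l2 = []") (auto simp: successively_append_iff successively_Cons)
  moreover have "A (last (l1 @ z # l2)) (hd (l1 @ z # l2))"
    using l b sp unfolding cycle_on_def by (cases "l2 = []") auto
  ultimately have "cycle_on S (l1 @ z # l2)"
    using l(1) sp z l(3) unfolding cycle_on_def by auto
  then show ?thesis using l(4) sp(1) by (intro exI[of _ "l1 @ z # l2"]) auto
qed

lemma cycle_on_replace:
  assumes c: "cycle_on S c" and x: "x \<in> S" "x \<notin> set c" "\<forall>w\<in>set c. A w x"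
    and y: "y \<in> S" "y \<notin> set c" "\<forall>w\<in>set c. A y w" and "A x y"
  shows "\<exists>c'. cycle_on S c' \<and> length c' = Suc (length c)"
proof -
  obtain c0 c1 c2 rest where e: "c = c0 # c1 # c2 # rest"
    using c unfolding cycle_on_def by (metis Suc_le_length_iff numeral_3_eq_3)
  have "x \<noteq> y" using \<open>A x y\<close> arc_asym by blast
  then have "cycle_on S (c0 # x # y # c2 # rest)"
    using c e x y \<open>A x y\<close> unfolding cycle_on_def by auto
  then show ?thesis using e by (intro exI) auto
qed

(* A vertex outside the cycle with both an in- and an out-neighbour on it can be inserted.
   Otherwise the outside splits into vertices dominated by the whole cycle and vertices
   dominating it; strong connectivity gives an arc from the former to the latter, and that
   arc replaces a single vertex of the cycle. *)
lemma cycle_on_extend: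
  assumes S: "S \<subseteq> V" "strong_on S" and c: "cycle_on S c" "set c \<noteq> S"
  shows "\<exists>c'. cycle_on S c' \<and> length c' = Suc (length c)"
proof (rule ccontr)
  assume no_longer: "\<not> ?thesis"
  have cS: "set c \<subseteq> S" "set c \<noteq> {}" using c(1) unfolding cycle_on_def by auto
  define Out where "Out = {z\<in>S - set c. \<forall>y\<in>set c. A y z}"
  define In where "In = {z\<in>S - set c. \<forall>y\<in>set c. A z y}"
  have outside: "S - set c \<subseteq> Out \<union> In"
  proof
    fix z assume z: "z \<in> S - set c"
    have "(\<forall>y\<in>set c. A y z) \<or> (\<forall>y\<in>set c. A z y)"
    proof (rule ccontr)
      assume "\<not> ?thesis"
      then obtain a b where "a \<in> set c" "\<not> A a z" "b \<in> set c" "\<not> A z b" by blast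
      then have "A z a" "A b z" using z cS S(1) arc_total[of z] by (metis Diff_iff subsetD)+
      then show False
        using cycle_on_insert[OF c(1) S(1)] z \<open>a \<in> set c\<close> \<open>b \<in> set c\<close> no_longer by blast
    qed
    then show "z \<in> Out \<union> In" using z unfolding Out_def In_def by blast
  qed
  have no_arc: "\<not> A x y" if "x \<in> Out" "y \<in> In" for x y
    using cycle_on_replace[OF c(1), of x y] that no_longer unfolding Out_def In_def by blast
  show False
  proof (cases "Out = {}")
    case False
    moreover have "hd c \<in> set c" using cS(2) by simp
    then have "Out \<subset> S" using cS(1) unfolding Out_def by blast
    ultimately obtain a b where "a \<in> Out" "b \<in> S - Out" "A a b"
      using S(2) unfolding strong_on_def by blast
    then show False using outside no_arc arc_asym unfolding Out_def by blast
  next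
    case True
    then obtain a b where "a \<in> set c" "b \<in> S - set c" "A a b"
      using S(2) cS c(2) unfolding strong_on_def by blast
    then show False using outside True arc_asym unfolding In_def by blast
  qed
qed

lemma strong_on_has_cycle:
  assumes S: "S \<subseteq> V" "strong_on S" and "2 \<le> card S"
  shows "\<exists>c. cycle_on S c"
proof -
  have "finite S" "\<not> card S \<le> Suc 0" using S(1) finite_V finite_subset assms(3) by auto
  then obtain x y where xy: "x \<in> S" "y \<in> S" "x \<noteq> y" using card_le_Suc0_iff_eq by blast
  define N where "N = {y\<in>S. A x y}"
  have "N \<noteq> {}"
  proof
    assume "N = {}"
    have "{x} \<subset> S" using xy by auto
    then obtain b where "b \<in> S - {x}" "A x b"
      using S(2) unfolding strong_on_def by blast
    then show False using \<open>N = {}\<close> unfolding N_def by blast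
  qed
  moreover have "N \<subset> S" using xy(1) arc_vertices unfolding N_def by blast
  ultimately obtain w z where wz: "w \<in> N" "z \<in> S - N" "A w z"
    using S(2) unfolding strong_on_def by blast
  then have "A z x"
    using arc_asym S(1) xy(1) arc_total[of x z] arc_vertices unfolding N_def by blast
  then have "cycle_on S [x, w, z]"
    using wz xy(1) arc_vertices unfolding N_def cycle_on_def by auto
  then show ?thesis by blast
qed

theorem camion:
  assumes S: "S \<subseteq> V" "strong_on S" and "card S \<ge> 2"
  shows "\<exists>c. cycle_on S c \<and> set c = S"
proof -
  have "finite S" using S(1) finite_V finite_subset by blast
  have "\<exists>c'. cycle_on S c' \<and> set c' = S" if "cycle_on S c" for c
    using that
  proof (induction "card S - length c" arbitrary: c rule: less_induct)
    case less
    show ?case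
    proof (cases "set c = S")
      case False
      then obtain c' where c': "cycle_on S c'" "length c' = Suc (length c)"
        using cycle_on_extend[OF S less.prems] by blast
      have "length c = card (set c)" using less.prems distinct_card unfolding cycle_on_def by metis
      moreover have "card (set c) < card S"
        using False less.prems \<open>finite S\<close> unfolding cycle_on_def by (auto intro: psubset_card_mono)
      ultimately show ?thesis using less.hyps[OF _ c'(1)] c'(2) by simp
    qed (use less.prems in blast)
  qed
  then show ?thesis using strong_on_has_cycle[OF assms] by blast
qed

end

section \<open>Near-regular tournaments\<close>

locale near_regular_tournament = tournament_digraph +
  fixes k :: nat
  assumes irregularity_le: "irregularity V A \<le> k"
begin

lemma degree_balance:
  assumes "x \<in> V"
  shows "out_degree V A x \<le> in_degree V A x + k" "in_degree V A x \<le> out_degree V A x + k"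
proof -
  let ?f = "\<lambda>x. nat \<bar>int (out_degree V A x) - int (in_degree V A x)\<bar>"
  have "?f x \<le> irregularity V A"
    unfolding irregularity_def using finite_V assms by (intro Max_ge) auto
  then show "out_degree V A x \<le> in_degree V A x + k" "in_degree V A x \<le> out_degree V A x + k"
    using irregularity_le by linarith+
qed

lemma card_V_pos: "x \<in> V \<Longrightarrow> 1 \<le> card V"
  using finite_V by (auto simp: Suc_le_eq card_gt_0_iff)

lemma card_V_le_out_degree:
  assumes "x \<in> V" shows "card V \<le> 2 * out_degree V A x + k + 1"
  using out_plus_in_degree[OF assms] degree_balance[OF assms] card_V_pos[OF assms] by linarith

lemma card_V_le_in_degree:
  assumes "x \<in> V" shows "card V \<le> 2 * in_degree V A x + k + 1"
  using out_plus_in_degree[OF assms] degree_balance[OF assms] card_V_pos[OF assms] by linarith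

lemma out_degree_le_card_V:
  assumes "x \<in> V" shows "2 * out_degree V A x + 1 \<le> card V + k"
  using out_plus_in_degree[OF assms] degree_balance[OF assms] card_V_pos[OF assms] by linarith

lemma in_degree_le_card_V:
  assumes "x \<in> V" shows "2 * in_degree V A x + 1 \<le> card V + k"
  using out_plus_in_degree[OF assms] degree_balance[OF assms] card_V_pos[OF assms] by linarith

lemma card_V_le_if_out_closed:
  assumes "S \<subseteq> V" "S \<noteq> {}" "finite W" and closed: "\<And>x y. x \<in> S \<Longrightarrow> A x y \<Longrightarrow> y \<in> S \<union> W"
  shows "card V \<le> card S + 2 * card W + k"
proof -
  obtain x where x: "x \<in> S" "2 * card {y\<in>S. A x y} + 1 \<le> card S"
    using ex_low_out_degree_within[OF assms(1,2)] by blast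
  have "{y\<in>V. A x y} \<subseteq> {y\<in>S. A x y} \<union> W" using closed[OF x(1)] by blast
  then have "out_degree V A x \<le> card ({y\<in>S. A x y} \<union> W)"
    unfolding out_degree_def using assms(1,3) finite_V by (intro card_mono) (auto intro: rev_finite_subset)
  also have "\<dots> \<le> card {y\<in>S. A x y} + card W" by (rule card_Un_le)
  finally have "out_degree V A x \<le> card {y\<in>S. A x y} + card W" .
  moreover have "x \<in> V" using x(1) assms(1) by blast
  ultimately show ?thesis using card_V_le_out_degree[of x] x(2) by linarith
qed

lemma card_V_le_if_in_closed:
  assumes "S \<subseteq> V" "S \<noteq> {}" "finite W" and closed: "\<And>x y. x \<in> S \<Longrightarrow> A y x \<Longrightarrow> y \<in> S \<union> W"
  shows "card V \<le> card S + 2 * card W + k"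
proof -
  obtain x where x: "x \<in> S" "2 * card {y\<in>S. A y x} + 1 \<le> card S"
    using ex_low_in_degree_within[OF assms(1,2)] by blast
  have "{y\<in>V. A y x} \<subseteq> {y\<in>S. A y x} \<union> W" using closed[OF x(1)] by blast
  then have "in_degree V A x \<le> card ({y\<in>S. A y x} \<union> W)"
    unfolding in_degree_def using assms(1,3) finite_V by (intro card_mono) (auto intro: rev_finite_subset)
  also have "\<dots> \<le> card {y\<in>S. A y x} + card W" by (rule card_Un_le)
  finally have "in_degree V A x \<le> card {y\<in>S. A y x} + card W" .
  moreover have "x \<in> V" using x(1) assms(1) by blast
  ultimately show ?thesis using card_V_le_in_degree[of x] x(2) by linarith
qed

end

section \<open>Containers with at least two paths\<close>

(* 5k + 9 is the value of 6t + 5k - 3 at t = 2. *)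
locale arc_split = near_regular_tournament +
  fixes u v :: 'a
  assumes arc_uv: "A u v" and card_V_large: "5 * k + 9 \<le> card V"
begin

lemma u_in_V: "u \<in> V" and v_in_V: "v \<in> V" and u_ne_v: "u \<noteq> v"
  using arc_vertices[OF arc_uv] by auto

definition rest :: "'a set" where "rest = V - {u, v}"
definition via_uv :: "'a set" where "via_uv = {x\<in>V. A u x \<and> A x v}"
definition via_vu :: "'a set" where "via_vu = {x\<in>V. A v x \<and> A x u}"
definition common_out :: "'a set" where "common_out = {x\<in>V. A u x \<and> A v x}"
definition common_in :: "'a set" where "common_in = {x\<in>V. A x u \<and> A x v}"

lemmas class_defs = via_uv_def via_vu_def common_out_def common_in_def

lemma rest_eq: "rest = common_out \<union> common_in \<union> via_uv \<union> via_vu"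
  unfolding rest_def class_defs using arc_total u_in_V v_in_V arc_vertices arc_asym arc_uv by blast

lemma rest_subset_V: "rest \<subseteq> V"
  unfolding rest_def by blast

lemma finite_rest: "finite rest"
  using finite_V rest_subset_V finite_subset by blast

lemma card_rest: "card rest = card V - 2"
  unfolding rest_def using u_in_V v_in_V u_ne_v finite_V by (simp add: card_Diff_subset)

lemma classes_disjoint: "common_out \<inter> common_in = {}" "common_out \<inter> via_uv = {}"
  unfolding class_defs using arc_asym by blast+

lemma out_degree_u_eq: "card ({y\<in>V. A u y} - {v}) + 1 = out_degree V A u"
proof -
  have "finite {y\<in>V. A u y}" "v \<in> {y\<in>V. A u y}" using finite_V arc_uv v_in_V by auto
  then show ?thesis unfolding out_degree_def
    using card_Diff_singleton[of v "{y\<in>V. A u y}"] card_gt_0_iff[of "{y\<in>V. A u y}"] by fastforce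
qed

lemma card_common_out: "2 * card common_out + 3 \<le> card V + k"
proof -
  have "card common_out \<le> card ({y\<in>V. A u y} - {v})"
    unfolding common_out_def using finite_V arc_vertices by (intro card_mono) auto
  then show ?thesis using out_degree_u_eq out_degree_le_card_V[OF u_in_V] by linarith
qed

lemma card_common_in: "2 * card common_in + 1 \<le> card V + k"
proof -
  have "card common_in \<le> in_degree V A u"
    unfolding in_degree_def common_in_def using finite_V by (intro card_mono) auto
  then show ?thesis using in_degree_le_card_V[OF u_in_V] by linarith
qed

lemma card_via_uv: "card via_uv + 1 \<le> card via_vu + k"
proof -
  have fin: "finite common_out" "finite via_uv" "finite via_vu"
    using finite_V unfolding class_defs by auto
  have "common_out \<union> via_uv \<subseteq> {y\<in>V. A u y} - {v}"
    unfolding class_defs using arc_vertices by blast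
  then have "card (common_out \<union> via_uv) \<le> card ({y\<in>V. A u y} - {v})"
    using finite_V by (intro card_mono) auto
  moreover have "card (common_out \<union> via_uv) = card common_out + card via_uv"
    using card_Un_disjoint[OF fin(1,2) classes_disjoint(2)] .
  moreover have "{y\<in>V. A v y} \<subseteq> common_out \<union> via_vu"
    unfolding class_defs using arc_total u_in_V arc_vertices arc_asym arc_uv by blast
  then have "out_degree V A v \<le> card (common_out \<union> via_vu)"
    unfolding out_degree_def using fin by (intro card_mono) auto
  moreover have "card (common_out \<union> via_vu) \<le> card common_out + card via_vu"
    by (rule card_Un_le)
  ultimately show ?thesis
    using out_degree_u_eq out_degree_le_card_V[OF u_in_V] card_V_le_out_degree[OF v_in_V] by linarith
qed

definition uv_path :: "'a list \<Rightarrow> bool" where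
  "uv_path p \<longleftrightarrow> is_path V A u v p \<or> is_path V A v u p"

lemma uv_path_facts:
  assumes "uv_path p"
  shows "distinct p" "set p \<subseteq> V" "successively A p" "{hd p, last p} = {u, v}"
    and "\<exists>q. p = hd p # q @ [last p]"
proof -
  show "distinct p" "set p \<subseteq> V" "successively A p" "{hd p, last p} = {u, v}"
    using assms unfolding uv_path_def is_path_iff by auto
  have "p \<noteq> []" "hd p \<noteq> last p" using assms u_ne_v unfolding uv_path_def is_path_iff by auto
  then show "\<exists>q. p = hd p # q @ [last p]"
  proof (cases p rule: rev_cases)
    case (snoc ys y)
    then show ?thesis using \<open>hd p \<noteq> last p\<close> by (cases ys) auto
  qed simp
qed

lemma uv_path_interior:
  assumes "uv_path p"
  shows "interior p = set p - {u, v}"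
proof -
  obtain a q b where q: "p = a # q @ [b]" using uv_path_facts(5)[OF assms] by blast
  then have "{a, b} = {u, v}" "a \<notin> set q" "b \<notin> set q"
    using uv_path_facts(1,4)[OF assms] by auto
  then show ?thesis unfolding q interior_def by (auto simp: doubleton_eq_iff)
qed

definition covered :: "'a list list \<Rightarrow> 'a set" where
  "covered Ps = (\<Union>p\<in>set Ps. set p)"

(* Paths in both directions are required so that vertices of via_uv and of via_vu
   can always be absorbed. *)
definition partial_container :: "'a list list \<Rightarrow> bool" where
  "partial_container Ps \<longleftrightarrow> distinct Ps \<and> (\<forall>p\<in>set Ps. uv_path p)
     \<and> (\<forall>p\<in>set Ps. \<forall>q\<in>set Ps. p \<noteq> q \<longrightarrow> (set p - {u, v}) \<inter> (set q - {u, v}) = {})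
     \<and> (\<exists>p\<in>set Ps. is_path V A u v p) \<and> (\<exists>p\<in>set Ps. is_path V A v u p)"

lemma covered_subset_V: "partial_container Ps \<Longrightarrow> covered Ps \<subseteq> V"
  unfolding partial_container_def covered_def using uv_path_facts(2) by blast

lemma uv_covered:
  assumes "partial_container Ps"
  shows "u \<in> covered Ps" "v \<in> covered Ps"
proof -
  obtain p where "p \<in> set Ps" "is_path V A u v p"
    using assms unfolding partial_container_def by blast
  then have "u \<in> set p" "v \<in> set p" unfolding is_path_iff by auto
  with \<open>p \<in> set Ps\<close> show "u \<in> covered Ps" "v \<in> covered Ps" unfolding covered_def by auto
qed

lemma weak_container_of_spanning:
  assumes "partial_container Ps" "covered Ps = V"
  shows "weak_container V A (length Ps) u v Ps"
proof -
  have "interior (Ps ! i) \<inter> interior (Ps ! j) = {}" if "i < length Ps" "j < length Ps" "i \<noteq> j" for i j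
  proof -
    have "Ps ! i \<noteq> Ps ! j" "Ps ! i \<in> set Ps" "Ps ! j \<in> set Ps"
      using assms(1) that nth_eq_iff_index_eq[of Ps i j] unfolding partial_container_def by auto
    then show ?thesis
      using assms(1) uv_path_interior unfolding partial_container_def by simp
  qed
  then show ?thesis
    using assms unfolding weak_container_def partial_container_def uv_path_def covered_def by blast
qed

lemma partial_container_uv_path: "partial_container Ps \<Longrightarrow> p \<in> set Ps \<Longrightarrow> uv_path p"
  unfolding partial_container_def by blast

lemma partial_container_disjoint:
  "partial_container Ps \<Longrightarrow> p \<in> set Ps \<Longrightarrow> q \<in> set Ps \<Longrightarrow> p \<noteq> q
    \<Longrightarrow> (set p - {u, v}) \<inter> (set q - {u, v}) = {}"
  unfolding partial_container_def by blast

lemma partial_container_update: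
  assumes pc: "partial_container Ps" and i: "i < length Ps" and p': "uv_path p'"
    and hd: "hd p' = hd (Ps ! i)" and set: "set p' = set (Ps ! i) \<union> N"
    and N: "N \<inter> covered Ps = {}" "N \<noteq> {}"
  shows "partial_container (Ps[i := p']) \<and> covered (Ps[i := p']) = covered Ps \<union> N"
proof -
  have pi: "Ps ! i \<in> set Ps" using i by simp
  have set_upd: "set (Ps[i := p']) = insert p' (set Ps - {Ps ! i})"
    using pc i unfolding partial_container_def by (simp add: set_update_distinct)
  have N_off: "N \<inter> set q = {}" if "q \<in> set Ps" for q
    using N(1) that unfolding covered_def by blast
  have p'_new: "p' \<notin> set Ps" using N_off[of p'] set N(2) by auto
  have same_dir: "is_path V A x y p'" if "is_path V A x y (Ps ! i)" for x y
  proof -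
    have "{hd (Ps ! i), last (Ps ! i)} = {u, v}" "{hd p', last p'} = {u, v}"
      using uv_path_facts(4) partial_container_uv_path[OF pc pi] p' by auto
    then have "last p' = last (Ps ! i)" using hd u_ne_v by (auto simp: doubleton_eq_iff)
    then show ?thesis using that p' hd unfolding uv_path_def is_path_iff by auto
  qed
  have new_disj: "(set p' - {u, v}) \<inter> (set q - {u, v}) = {}" if "q \<in> set Ps" "q \<noteq> Ps ! i" for q
    using partial_container_disjoint[OF pc pi that(1)] that(2) N_off[OF that(1)] unfolding set by blast
  have "distinct (Ps[i := p'])"
    using pc p'_new unfolding partial_container_def by (intro distinct_list_update) auto
  moreover have "\<forall>p\<in>set (Ps[i := p']). uv_path p"
    using partial_container_uv_path[OF pc] p' unfolding set_upd by blast
  moreover have "(set p - {u, v}) \<inter> (set q - {u, v}) = {}"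
    if "p \<in> set (Ps[i := p'])" "q \<in> set (Ps[i := p'])" "p \<noteq> q" for p q
    using that partial_container_disjoint[OF pc, of p q] new_disj[of p] new_disj[of q]
    unfolding set_upd by (cases "p = p'"; cases "q = p'") auto
  moreover have "\<exists>p\<in>set (Ps[i := p']). is_path V A x y p"
    if ex: "\<exists>p\<in>set Ps. is_path V A x y p" for x y
  proof -
    obtain p where "p \<in> set Ps" "is_path V A x y p" using ex by blast
    then show ?thesis using same_dir unfolding set_upd by (cases "p = Ps ! i") auto
  qed
  ultimately have "partial_container (Ps[i := p'])"
    using pc unfolding partial_container_def by simp
  moreover have "covered (Ps[i := p']) = covered Ps \<union> N"
    unfolding covered_def set_upd using set pi by auto
  ultimately show ?thesis by blast
qed

definition extendable :: "'a list list \<Rightarrow> bool" where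
  "extendable Ps \<longleftrightarrow> (\<exists>Ps'. partial_container Ps' \<and> length Ps' = length Ps \<and> covered Ps \<subset> covered Ps')"

lemma extendable_by_insertion:
  assumes pc: "partial_container Ps" and p: "p \<in> set Ps" "p = ys @ zs"
    and z: "z \<in> V" "z \<notin> covered Ps" and "\<exists>a\<in>set ys. A a z" "\<exists>b\<in>set zs. A z b"
  shows "extendable Ps"
proof -
  obtain i where i: "i < length Ps" "Ps ! i = p" using p(1) by (auto simp: in_set_conv_nth)
  obtain x y where xy: "is_path V A x y p"
    using partial_container_uv_path[OF pc p(1)] unfolding uv_path_def by blast
  have "z \<notin> set p" using z(2) p(1) unfolding covered_def by blast
  then obtain p' where p': "is_path V A x y p'" "set p' = insert z (set p)"
    using path_insert[OF xy z(1) _ p(2)] assms(6,7) by blast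
  have "hd p' = hd p" "last p' = last p" using p' xy by (auto simp: is_path_iff)
  then have "uv_path p'"
    using partial_container_uv_path[OF pc p(1)] p'(1) xy unfolding uv_path_def is_path_iff by auto
  then have "partial_container (Ps[i := p']) \<and> covered (Ps[i := p']) = covered Ps \<union> {z}"
    using partial_container_update[OF pc i(1), of p' "{z}"] i(2) p' xy z(2)
    by (auto simp: is_path_iff)
  then show ?thesis unfolding extendable_def using z(2) by (intro exI[of _ "Ps[i := p']"]) auto
qed

lemma extendable_via_uv:
  assumes pc: "partial_container Ps" and z: "z \<in> via_uv" "z \<notin> covered Ps"
  shows "extendable Ps"
proof -
  obtain p where p: "p \<in> set Ps" "is_path V A u v p"
    using pc unfolding partial_container_def by blast
  obtain q where "p = hd p # q @ [last p]"
    using uv_path_facts(5) partial_container_uv_path[OF pc p(1)] by blast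
  then have "p = [u] @ (q @ [v])" using p(2) by (simp add: is_path_iff)
  moreover have "z \<in> V" "A u z" "A z v" using z(1) unfolding via_uv_def by auto
  ultimately show ?thesis
    using extendable_by_insertion[where ys = "[u]" and zs = "q @ [v]", OF pc p(1) _ _ z(2)] by auto
qed

lemma extendable_via_vu:
  assumes pc: "partial_container Ps" and z: "z \<in> via_vu" "z \<notin> covered Ps"
  shows "extendable Ps"
proof -
  obtain p where p: "p \<in> set Ps" "is_path V A v u p"
    using pc unfolding partial_container_def by blast
  obtain q where "p = hd p # q @ [last p]"
    using uv_path_facts(5) partial_container_uv_path[OF pc p(1)] by blast
  then have "p = [v] @ (q @ [u])" using p(2) by (simp add: is_path_iff)
  moreover have "z \<in> V" "A v z" "A z u" using z(1) unfolding via_vu_def by auto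
  ultimately show ?thesis
    using extendable_by_insertion[where ys = "[v]" and zs = "q @ [u]", OF pc p(1) _ _ z(2)] by auto
qed

lemma extendable_common_out:
  assumes pc: "partial_container Ps" and z: "z \<in> common_out" "z \<notin> covered Ps"
    and p: "p \<in> set Ps" and w: "w \<in> set p - {u, v}" "A z w"
  shows "extendable Ps"
proof -
  obtain ys zs where split: "p = ys @ w # zs" using w(1) split_list by fastforce
  have "hd p \<in> {u, v}" using uv_path_facts(4) partial_container_uv_path[OF pc p] by blast
  then have "hd p \<in> set ys" "A (hd p) z" using split w(1) z(1) unfolding common_out_def by (cases ys; auto)+
  then show ?thesis
    using extendable_by_insertion[OF pc p, of ys "w # zs" z] split z w(2) unfolding common_out_def by auto
qed

lemma extendable_common_in:
  assumes pc: "partial_container Ps" and z: "z \<in> common_in" "z \<notin> covered Ps"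
    and p: "p \<in> set Ps" and w: "w \<in> set p - {u, v}" "A w z"
  shows "extendable Ps"
proof -
  obtain ys zs where split: "p = (ys @ [w]) @ zs" using w(1) split_list by fastforce
  have "last p \<in> {u, v}" using uv_path_facts(4) partial_container_uv_path[OF pc p] by blast
  then have "last p \<in> set zs" "A z (last p)"
    using split w(1) z(1) unfolding common_in_def by (cases zs rule: rev_cases; auto)+
  then show ?thesis
    using extendable_by_insertion[OF pc p split, of z] z w(2) unfolding common_in_def by auto
qed

lemma extendable_pair:
  assumes pc: "partial_container Ps" and x: "x \<in> common_out" "x \<notin> covered Ps"
    and y: "y \<in> common_in" "y \<notin> covered Ps" and "A x y"
    and p: "p \<in> set Ps" and into_x: "\<forall>w\<in>set p - {u, v}. A w x"
  shows "extendable Ps"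
proof -
  obtain i where i: "i < length Ps" "Ps ! i = p" using p by (auto simp: in_set_conv_nth)
  have uv: "uv_path p" using partial_container_uv_path[OF pc p] .
  obtain a q b where aqb: "p = a # q @ [b]" using uv_path_facts(5)[OF uv] by blast
  have ends: "{a, b} = {u, v}" "a \<notin> set q" "b \<notin> set q" "a \<noteq> b"
    using uv_path_facts(1,4)[OF uv] unfolding aqb by auto
  have "A (last (a # q)) x"
  proof (cases "q = []")
    case True
    then show ?thesis using ends(1) x(1) unfolding common_out_def by auto
  next
    case False
    then have "last q \<in> set q" by simp
    then have "last q \<in> set p - {u, v}" using ends unfolding aqb by auto
    then show ?thesis using into_x False by simp
  qed
  moreover have "A y b" using ends(1) y(1) unfolding common_in_def by auto
  moreover have "successively A (a # q)"
    using uv_path_facts(3)[OF uv] successively_append_iff[of A "a # q" "[b]"] unfolding aqb by simp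
  ultimately have "successively A ((a # q) @ [x, y, b])"
    using \<open>A x y\<close> by (simp only: successively_append_iff) simp
  moreover have "x \<notin> set p" "y \<notin> set p" "x \<noteq> y"
    using x(2) y(2) p \<open>A x y\<close> arc_asym unfolding covered_def by auto
  moreover have "x \<in> V" "y \<in> V" using x(1) y(1) unfolding class_defs by auto
  ultimately have "uv_path ((a # q) @ [x, y, b])"
    using uv unfolding aqb uv_path_def is_path_iff by (auto simp: hd_append)
  moreover have "hd ((a # q) @ [x, y, b]) = hd (Ps ! i)"
    "set ((a # q) @ [x, y, b]) = set (Ps ! i) \<union> {x, y}"
    unfolding i(2) aqb by auto
  moreover have "{x, y} \<inter> covered Ps = {}" using x(2) y(2) by auto
  ultimately have "partial_container (Ps[i := (a # q) @ [x, y, b]])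
      \<and> covered (Ps[i := (a # q) @ [x, y, b]]) = covered Ps \<union> {x, y}"
    using partial_container_update[OF pc i(1)] by blast
  then show ?thesis unfolding extendable_def using x(2)
    by (intro exI[of _ "Ps[i := (a # q) @ [x, y, b]]"]) auto
qed

lemma out_neighbour_uncovered_if_stuck:
  assumes pc: "partial_container Ps" and stuck: "\<not> extendable Ps"
    and x: "x \<in> common_out" "x \<notin> covered Ps" and "A x y"
  shows "y \<notin> covered Ps"
proof
  assume "y \<in> covered Ps"
  moreover have "y \<noteq> u" "y \<noteq> v" using x(1) \<open>A x y\<close> arc_asym unfolding common_out_def by auto
  ultimately obtain p where "p \<in> set Ps" "y \<in> set p - {u, v}" unfolding covered_def by blast
  then show False using extendable_common_out[OF pc x] \<open>A x y\<close> stuck by blast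
qed

lemma in_neighbour_uncovered_if_stuck:
  assumes pc: "partial_container Ps" and stuck: "\<not> extendable Ps"
    and x: "x \<in> common_in" "x \<notin> covered Ps" and "A y x"
  shows "y \<notin> covered Ps"
proof
  assume "y \<in> covered Ps"
  moreover have "y \<noteq> u" "y \<noteq> v" using x(1) \<open>A y x\<close> arc_asym unfolding common_in_def by auto
  ultimately obtain p where "p \<in> set Ps" "y \<in> set p - {u, v}" unfolding covered_def by blast
  then show False using extendable_common_in[OF pc x] \<open>A y x\<close> stuck by blast
qed

lemma uncovered_in_common_if_stuck:
  assumes pc: "partial_container Ps" and stuck: "\<not> extendable Ps"
    and z: "z \<in> V" "z \<notin> covered Ps"
  shows "z \<in> common_out \<union> common_in"
proof -
  have "z \<in> rest" using z uv_covered[OF pc] unfolding rest_def by auto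
  moreover have "z \<notin> via_uv" using extendable_via_uv[OF pc _ z(2)] stuck by blast
  moreover have "z \<notin> via_vu" using extendable_via_vu[OF pc _ z(2)] stuck by blast
  ultimately show ?thesis using rest_eq by blast
qed

lemma uncovered_common_out_closed_if_stuck:
  assumes pc: "partial_container Ps" and stuck: "\<not> extendable Ps"
    and x: "x \<in> common_out" "x \<notin> covered Ps" and "A x y"
  shows "y \<in> common_out - covered Ps"
proof -
  have y: "y \<in> V" "y \<notin> covered Ps"
    using out_neighbour_uncovered_if_stuck[OF assms] arc_vertices[OF \<open>A x y\<close>] by auto
  obtain p where p: "p \<in> set Ps" using pc unfolding partial_container_def by blast
  have "A w x" if "w \<in> set p - {u, v}" for w
  proof -
    have "w \<in> covered Ps" "w \<in> V" using that p covered_subset_V[OF pc] unfolding covered_def by auto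
    then show "A w x"
      using out_neighbour_uncovered_if_stuck[OF pc stuck x] arc_total[of w x] x
      unfolding common_out_def by blast
  qed
  then have "y \<notin> common_in" using extendable_pair[OF pc x _ y(2) \<open>A x y\<close> p] stuck by blast
  then show ?thesis using uncovered_in_common_if_stuck[OF pc stuck y] y(2) by blast
qed

lemma extendable_if_not_spanning:
  assumes pc: "partial_container Ps" and "covered Ps \<noteq> V"
  shows "extendable Ps"
proof (rule ccontr)
  assume stuck: "\<not> extendable Ps"
  define Z where "Z = V - covered Ps"
  have Z: "Z \<subseteq> V" "Z \<noteq> {}" using assms covered_subset_V unfolding Z_def by auto
  have fin: "finite common_out" "finite common_in" using finite_V unfolding class_defs by auto
  show False
  proof (cases "Z \<inter> common_out = {}")
    case False
    have "common_out - covered Ps \<subseteq> V" "common_out - covered Ps \<noteq> {}"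
      using False unfolding Z_def common_out_def by auto
    then have "card V \<le> card (common_out - covered Ps) + k"
      using card_V_le_if_out_closed[of "common_out - covered Ps" "{}"]
        uncovered_common_out_closed_if_stuck[OF pc stuck] by auto
    moreover have "card (common_out - covered Ps) \<le> card common_out" using fin by (intro card_mono) auto
    ultimately show False using card_common_out card_V_large by linarith
  next
    case True
    then have "Z \<subseteq> common_in"
      using uncovered_in_common_if_stuck[OF pc stuck] unfolding Z_def by blast
    have "y \<in> Z \<union> {}" if "x \<in> Z" "A y x" for x y
      using in_neighbour_uncovered_if_stuck[OF pc stuck, of x y] that \<open>Z \<subseteq> common_in\<close>
        arc_vertices[OF \<open>A y x\<close>] unfolding Z_def by blast
    then have "card V \<le> card Z + k" using card_V_le_if_in_closed[OF Z, of "{}"] by simp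
    moreover have "card Z \<le> card common_in" using fin \<open>Z \<subseteq> common_in\<close> by (intro card_mono)
    ultimately show False using card_common_in card_V_large by linarith
  qed
qed

lemma spanning_partial_container:
  assumes "partial_container Ps"
  shows "\<exists>Ps'. partial_container Ps' \<and> length Ps' = length Ps \<and> covered Ps' = V"
  using assms
proof (induction "card (V - covered Ps)" arbitrary: Ps rule: less_induct)
  case less
  show ?case
  proof (cases "covered Ps = V")
    case False
    then obtain Ps' where Ps': "partial_container Ps'" "length Ps' = length Ps" "covered Ps \<subset> covered Ps'"
      using extendable_if_not_spanning[OF less.prems] unfolding extendable_def by blast
    have "V - covered Ps' \<subset> V - covered Ps" using Ps'(3) covered_subset_V[OF Ps'(1)] by blast
    then have "card (V - covered Ps') < card (V - covered Ps)"
      using finite_V by (intro psubset_card_mono) auto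
    from less.hyps[OF this Ps'(1)] Ps'(2) show ?thesis by auto
  qed (use less.prems in blast)
qed

lemma separated_closure:
  assumes W: "W \<subseteq> rest" "via_uv \<union> via_vu \<subseteq> W"
    and no_arc: "\<And>x y. x \<in> common_out - W \<Longrightarrow> y \<in> common_in - W \<Longrightarrow> \<not> A x y"
  shows "x \<in> common_out - W \<Longrightarrow> A x y \<Longrightarrow> y \<in> (common_out - W) \<union> W"
    and "x \<in> common_in - W \<Longrightarrow> A y x \<Longrightarrow> y \<in> (common_in - W) \<union> W"
proof -
  show "y \<in> (common_out - W) \<union> W" if "x \<in> common_out - W" "A x y"
  proof -
    have "y \<in> rest" using that arc_vertices arc_asym unfolding rest_def common_out_def by blast
    then show ?thesis using that no_arc rest_eq W(2) by blast
  qed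
  show "y \<in> (common_in - W) \<union> W" if "x \<in> common_in - W" "A y x"
  proof -
    have "y \<in> rest" using that arc_vertices arc_asym unfolding rest_def common_in_def by blast
    then show ?thesis using that no_arc rest_eq W(2) by blast
  qed
qed

lemma separated_rest_card:
  assumes W: "W \<subseteq> rest" "via_uv \<union> via_vu \<subseteq> W"
    and no_arc: "\<And>x y. x \<in> common_out - W \<Longrightarrow> y \<in> common_in - W \<Longrightarrow> \<not> A x y"
  shows "card V + 2 \<le> 3 * card W + 2 * k \<or> card V \<le> 2 * card W + k + 3"
proof -
  have fin: "finite W" "finite common_out" "finite common_in"
    using W(1) finite_rest finite_subset finite_V unfolding class_defs by auto
  have rest_W: "rest - W = (common_out - W) \<union> (common_in - W)" using rest_eq W by blast
  have "card (rest - W) = card V - 2 - card W"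
    using W(1) card_rest fin(1) by (simp add: card_Diff_subset)
  moreover have "(common_out - W) \<inter> (common_in - W) = {}" using classes_disjoint(1) by blast
  then have "card (rest - W) = card (common_out - W) + card (common_in - W)"
    unfolding rest_W using fin(2,3) by (simp add: card_Un_disjoint)
  ultimately have sum: "card (common_out - W) + card (common_in - W) = card V - 2 - card W"
    by simp
  have B_sub: "common_out \<subseteq> V" and C_sub: "common_in \<subseteq> V" unfolding class_defs by auto
  consider "common_out - W = {}" | "common_in - W = {}"
    | "common_out - W \<noteq> {}" "common_in - W \<noteq> {}" by blast
  then show ?thesis
  proof cases
    case 1
    then have "card (common_in - W) \<le> card common_in" using fin by (intro card_mono) auto
    moreover have "card (common_in - W) = card V - 2 - card W" using sum 1 by simp
    ultimately show ?thesis using card_common_in by linarith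
  next
    case 2
    then have "card (common_out - W) \<le> card common_out" using fin by (intro card_mono) auto
    moreover have "card (common_out - W) = card V - 2 - card W" using sum 2 by simp
    ultimately show ?thesis using card_common_out by linarith
  next
    case 3
    have "card V \<le> card (common_out - W) + 2 * card W + k"
      using B_sub 3(1) fin(1) separated_closure(1)[OF W no_arc]
      by (intro card_V_le_if_out_closed) auto
    moreover have "card V \<le> card (common_in - W) + 2 * card W + k"
      using C_sub 3(2) fin(1) separated_closure(2)[OF W no_arc]
      by (intro card_V_le_if_in_closed) auto
    ultimately show ?thesis using sum card_V_large by linarith
  qed
qed

lemma is_path_uv: "is_path V A u v [u, v]"
  unfolding is_path_iff using u_in_V v_in_V u_ne_v arc_uv by auto

lemma is_path_via_uv: "z \<in> via_uv \<Longrightarrow> is_path V A u v [u, z, v]"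
  unfolding is_path_iff via_uv_def using u_in_V v_in_V u_ne_v arc_vertices by auto

lemma is_path_via_vu: "z \<in> via_vu \<Longrightarrow> is_path V A v u [v, z, u]"
  unfolding is_path_iff via_vu_def using u_in_V v_in_V u_ne_v arc_vertices by auto

lemma is_path_common_out_in:
  "x \<in> common_out \<Longrightarrow> y \<in> common_in \<Longrightarrow> A x y \<Longrightarrow> is_path V A v u [v, x, y, u]"
  unfolding is_path_iff class_defs using u_in_V v_in_V u_ne_v arc_vertices arc_asym by auto

lemma short_uv_path_avoiding:
  assumes W: "W \<subseteq> rest" and small: "3 * card W + 2 * k < card V + 2" "2 * card W + k + 3 < card V"
  shows "\<exists>p. uv_path p \<and> set p - {u, v} \<noteq> {} \<and> (set p - {u, v}) \<inter> W = {} \<and> card (set p - {u, v}) \<le> 2"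
proof -
  have "x \<noteq> u \<and> x \<noteq> v" if "x \<in> rest" for x using that unfolding rest_def by blast
  then have off_uv: "x \<noteq> u" "x \<noteq> v" if "x \<in> rest" for x using that by auto
  consider z where "z \<in> via_uv - W" | z where "z \<in> via_vu - W"
    | x y where "x \<in> common_out - W" "y \<in> common_in - W" "A x y"
    using separated_rest_card[OF W] small by fastforce
  then show ?thesis
  proof cases
    case (1 z)
    then have "set [u, z, v] - {u, v} = {z}" using off_uv rest_eq by auto
    then show ?thesis using 1 is_path_via_uv unfolding uv_path_def by (intro exI[of _ "[u, z, v]"]) auto
  next
    case (2 z)
    then have "set [v, z, u] - {u, v} = {z}" using off_uv rest_eq by auto
    then show ?thesis using 2 is_path_via_vu unfolding uv_path_def by (intro exI[of _ "[v, z, u]"]) auto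
  next
    case (3 x y)
    then have "set [v, x, y, u] - {u, v} = {x, y}" using off_uv rest_eq by auto
    moreover have "card {x, y} \<le> 2" by (simp add: card_insert_le_m1)
    ultimately show ?thesis using 3 is_path_common_out_in unfolding uv_path_def
      by (intro exI[of _ "[v, x, y, u]"]) auto
  qed
qed

lemma partial_container_snoc:
  assumes pc: "partial_container Ps" and p: "uv_path p" "set p - {u, v} \<noteq> {}"
    and new: "(set p - {u, v}) \<inter> covered Ps = {}"
  shows "partial_container (Ps @ [p]) \<and> covered (Ps @ [p]) = covered Ps \<union> set p"
proof -
  have "p \<notin> set Ps" using p(2) new unfolding covered_def by blast
  moreover have "(set p - {u, v}) \<inter> (set q - {u, v}) = {}" if "q \<in> set Ps" for q
    using new that unfolding covered_def by blast
  ultimately have "partial_container (Ps @ [p])"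
    using pc p(1) unfolding partial_container_def by (auto simp: Int_commute)
  then show ?thesis unfolding covered_def by auto
qed

lemma two_path_container:
  "\<exists>Ps. partial_container Ps \<and> length Ps = 2 \<and> card (covered Ps - {u, v}) \<le> 2"
proof -
  have off_uv: "x \<noteq> u" "x \<noteq> v" if "x \<in> rest" for x using that unfolding rest_def by auto
  have "\<exists>p. is_path V A v u p \<and> set p - {u, v} \<noteq> {} \<and> card (set p - {u, v}) \<le> 2"
  proof -
    consider z where "z \<in> via_vu" | x y where "x \<in> common_out" "y \<in> common_in" "A x y"
      | "via_vu = {}" "\<And>x y. x \<in> common_out - via_uv \<Longrightarrow> y \<in> common_in - via_uv \<Longrightarrow> \<not> A x y"
      by blast
    then show ?thesis
    proof cases
      case (1 z)
      then have "set [v, z, u] - {u, v} = {z}" using off_uv rest_eq by auto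
      then show ?thesis using 1 is_path_via_vu by (intro exI[of _ "[v, z, u]"]) auto
    next
      case (2 x y)
      then have "set [v, x, y, u] - {u, v} = {x, y}" using off_uv rest_eq by auto
      moreover have "card {x, y} \<le> 2" by (simp add: card_insert_le_m1)
      ultimately show ?thesis using 2 is_path_common_out_in by (intro exI[of _ "[v, x, y, u]"]) auto
    next
      case 3
      then have "card V + 2 \<le> 3 * card via_uv + 2 * k \<or> card V \<le> 2 * card via_uv + k + 3"
        using separated_rest_card[of via_uv] rest_eq by auto
      then show ?thesis using card_via_uv 3(1) card_V_large by auto
    qed
  qed
  then obtain p where p: "is_path V A v u p" "set p - {u, v} \<noteq> {}" "card (set p - {u, v}) \<le> 2"
    by blast
  have "partial_container [[u, v], p]"
    using p is_path_uv unfolding partial_container_def uv_path_def by auto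
  moreover have "covered [[u, v], p] = set p"
    using p(1) unfolding covered_def is_path_iff by (auto dest: hd_in_set last_in_set)
  ultimately show ?thesis using p(3) by (intro exI[of _ "[[u, v], p]"]) auto
qed

lemma short_partial_container:
  assumes "1 \<le> s" "6 * s + 5 * k \<le> card V + 3"
  shows "\<exists>Ps. partial_container Ps \<and> length Ps = s + 1 \<and> card (covered Ps - {u, v}) \<le> 2 * s"
  using assms
proof (induction s rule: nat_induct_at_least)
  case base
  then show ?case using two_path_container by (simp add: numeral_2_eq_2)
next
  case (Suc s)
  then obtain Ps where Ps: "partial_container Ps" "length Ps = s + 1" "card (covered Ps - {u, v}) \<le> 2 * s"
    by auto
  define W where "W = covered Ps - {u, v}"
  have "W \<subseteq> rest" using covered_subset_V[OF Ps(1)] unfolding W_def rest_def by blast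
  moreover have "card W \<le> 2 * s" using Ps(3) unfolding W_def .
  then have "3 * card W + 2 * k < card V + 2" and "2 * card W + k + 3 < card V"
    using Suc.prems Suc.hyps by simp_all
  ultimately obtain p where p: "uv_path p" "set p - {u, v} \<noteq> {}" "(set p - {u, v}) \<inter> W = {}"
      "card (set p - {u, v}) \<le> 2"
    using short_uv_path_avoiding by blast
  have "(set p - {u, v}) \<inter> covered Ps = {}" using p(3) unfolding W_def by blast
  then have pc: "partial_container (Ps @ [p]) \<and> covered (Ps @ [p]) = covered Ps \<union> set p"
    using partial_container_snoc[OF Ps(1) p(1,2)] by blast
  then have "covered (Ps @ [p]) - {u, v} = W \<union> (set p - {u, v})" unfolding W_def by blast
  then have "card (covered (Ps @ [p]) - {u, v}) \<le> card W + card (set p - {u, v})"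
    by (simp add: card_Un_le)
  then show ?case using pc Ps(2,3) p(4) unfolding W_def by (intro exI[of _ "Ps @ [p]"]) auto
qed

lemma weak_container_at_least_2:
  assumes "2 \<le> \<omega>" "6 * \<omega> + 5 * k \<le> card V + 9"
  shows "\<exists>Ps. weak_container V A \<omega> u v Ps"
proof -
  have "1 \<le> \<omega> - 1" "6 * (\<omega> - 1) + 5 * k \<le> card V + 3" using assms by linarith+
  then obtain Ps where "partial_container Ps" "length Ps = \<omega>"
    using short_partial_container[of "\<omega> - 1"] assms(1) by auto
  then obtain Ps' where "partial_container Ps'" "length Ps' = \<omega>" "covered Ps' = V"
    using spanning_partial_container by metis
  then show ?thesis using weak_container_of_spanning by metis
qed

section \<open>Spanning paths between u and v\<close>

lemma strong_on_rest: "strong_on rest"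
  unfolding strong_on_def
proof (intro allI impI)
  fix X assume X: "X \<subset> rest" "X \<noteq> {}"
  show "\<exists>a\<in>X. \<exists>b\<in>rest - X. A a b"
  proof (rule ccontr)
    assume no_arc: "\<not> ?thesis"
    have fin: "finite {u, v}" by simp
    have "y \<in> X \<union> {u, v}" if "x \<in> X" "A x y" for x y
      using that X(1) no_arc arc_vertices unfolding rest_def by blast
    then have "card V \<le> card X + 2 * card {u, v} + k"
      using X rest_subset_V by (intro card_V_le_if_out_closed[OF _ _ fin]) auto
    moreover have "y \<in> (rest - X) \<union> {u, v}" if "x \<in> rest - X" "A y x" for x y
      using that no_arc arc_vertices unfolding rest_def by blast
    then have "card V \<le> card (rest - X) + 2 * card {u, v} + k"
      using X rest_subset_V by (intro card_V_le_if_in_closed[OF _ _ fin]) auto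
    moreover have "card (rest - X) + card X = card rest"
    proof -
      have "finite X" "X \<subseteq> rest" using X(1) finite_rest finite_subset by auto
      then show ?thesis using card_Diff_subset[of X rest] card_mono[OF finite_rest] by simp
    qed
    moreover have "card {u, v} = 2" using u_ne_v by simp
    ultimately show False using card_rest card_V_large by linarith
  qed
qed

lemma hamiltonian_cycle_rest: "\<exists>c. cycle_on rest c \<and> set c = rest"
  using camion[OF rest_subset_V strong_on_rest] card_rest card_V_large by simp

(* A spanning path of rest from b to a becomes a spanning u-v or v-u path of V. *)
definition links :: "'a \<Rightarrow> 'a \<Rightarrow> bool" where
  "links a b \<longleftrightarrow> (A a v \<and> A u b) \<or> (A a u \<and> A v b)"

definition rest_path :: "'a list \<Rightarrow> bool" where
  "rest_path l \<longleftrightarrow> l \<noteq> [] \<and> distinct l \<and> set l = rest \<and> successively A l"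

lemma spanning_uv_path_of_rest_path:
  assumes l: "rest_path l" and "links (last l) (hd l)"
  shows "\<exists>p. uv_path p \<and> set p = V"
proof -
  have l_facts: "l \<noteq> []" "distinct l" "set l = V - {u, v}" "successively A l"
    using l unfolding rest_path_def rest_def by auto
  have closed: "is_path V A a b (a # l @ [b]) \<and> set (a # l @ [b]) = V"
    if "a \<in> {u, v}" "b \<in> {u, v}" "a \<noteq> b" "A a (hd l)" "A (last l) b" for a b
  proof -
    have "successively A (l @ [b])" using l_facts that by (simp add: successively_append_iff)
    then have "successively A (a # l @ [b])" using that l_facts by (simp add: successively_Cons)
    then show ?thesis
      using that l_facts u_in_V v_in_V unfolding is_path_iff by auto
  qed
  show ?thesis
    using assms(2) closed[of u v] closed[of v u] u_ne_v unfolding links_def uv_path_def by blast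
qed

lemma spanning_uv_path_of_linked_cut:
  assumes c: "cycle_on rest c" "set c = rest"
    and cut: "c = l1 @ l2" "l1 \<noteq> []" "l2 \<noteq> []" "links (last l1) (hd l2)"
  shows "\<exists>p. uv_path p \<and> set p = V"
proof -
  have "successively A l1" "successively A l2" "A (last l2) (hd l1)"
    using c(1) cut(1-3) unfolding cycle_on_def by (auto simp: successively_append_iff)
  then have "rest_path (l2 @ l1)"
    using c cut(1-3) unfolding cycle_on_def rest_path_def by (auto simp: successively_append_iff)
  then show ?thesis using spanning_uv_path_of_rest_path cut(2-4) by simp
qed

lemma rest_not_subset_common_in: "\<not> rest \<subseteq> common_in"
proof
  assume "rest \<subseteq> common_in"
  then have "{y\<in>V. A u y} \<subseteq> {v}"
    unfolding rest_def common_in_def using arc_vertices arc_asym by blast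
  then have "out_degree V A u \<le> 1"
    unfolding out_degree_def by (metis card.empty card_insert_disjoint card_mono empty_iff
        finite.emptyI finite.insertI One_nat_def)
  then show False using card_V_le_out_degree[OF u_in_V] card_V_large by linarith
qed

lemma rest_not_subset_common_out: "\<not> rest \<subseteq> common_out"
proof
  assume "rest \<subseteq> common_out"
  then have "{y\<in>V. A y u} = {}"
    unfolding rest_def common_out_def using arc_vertices arc_asym arc_uv by blast
  then have "in_degree V A u = 0" unfolding in_degree_def by (simp only: card.empty)
  then show False using card_V_le_in_degree[OF u_in_V] card_V_large by linarith
qed

lemma no_links_classes:
  assumes c: "cycle_on rest c" "set c = rest"
    and no_link: "successively (\<lambda>a b. \<not> links a b) c" "\<not> links (last c) (hd c)"
  shows "common_out = {}" "common_in = {}"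
proof -
  have in_V: "x \<in> V" "x \<noteq> u" "x \<noteq> v" if "x \<in> set c" for x using that c(2) unfolding rest_def by auto
  have "set c \<subseteq> common_in" if "x \<in> set c" "x \<in> common_in" for x
  proof (rule cyclically_closed[OF no_link _ that])
    fix a b assume "a \<in> set c" "b \<in> set c" "\<not> links a b" "a \<in> common_in"
    then show "b \<in> common_in"
      using in_V[of b] arc_total[of b u] arc_total[of b v] u_in_V v_in_V
      unfolding links_def common_in_def by blast
  qed
  then show C: "common_in = {}"
    using rest_not_subset_common_in c(2) rest_eq by blast
  have "set c \<subseteq> rest - common_out" if "x \<in> set c" "x \<in> rest - common_out" for x
  proof (rule cyclically_closed[OF no_link _ that])
    fix a b assume "a \<in> set c" "b \<in> set c" "\<not> links a b" "a \<in> rest - common_out"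
    then show "b \<in> rest - common_out"
      using C c(2) rest_eq unfolding links_def class_defs by blast
  qed
  then show "common_out = {}"
    using rest_not_subset_common_out c(2) rest_eq by blast
qed

lemma card_out_within_rest:
  assumes "x \<in> via_uv \<union> via_vu"
  shows "3 \<le> card {y\<in>rest. A x y}"
proof -
  obtain w where "{y\<in>V. A x y} \<subseteq> {y\<in>rest. A x y} \<union> {w}"
  proof
    show "{y\<in>V. A x y} \<subseteq> {y\<in>rest. A x y} \<union> {if x \<in> via_uv then v else u}"
      using assms arc_asym unfolding rest_def class_defs by auto
  qed
  then have "out_degree V A x \<le> card ({y\<in>rest. A x y} \<union> {w})"
    unfolding out_degree_def using finite_rest by (intro card_mono) auto
  also have "\<dots> \<le> card {y\<in>rest. A x y} + 1" using card_Un_le[of _ "{w}"] by simp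
  finally show ?thesis
    using assms card_V_le_out_degree[of x] card_V_large unfolding class_defs by auto
qed

lemma rest_path_by_insertion:
  assumes q: "is_path V A a b q" "set q = rest - {z}" and z: "z \<in> rest"
    and split: "q = q1 @ q2" "\<exists>a'\<in>set q1. A a' z" "\<exists>b'\<in>set q2. A z b'"
  shows "\<exists>l. rest_path l \<and> hd l = a \<and> last l = b"
proof -
  obtain l where "is_path V A a b l" "set l = insert z (set q)"
    using path_insert[OF q(1) _ _ split] z q(2) rest_subset_V by blast
  then show ?thesis using q(2) z unfolding rest_path_def is_path_iff by auto
qed

lemma rest_path_skipping_second:
  assumes c: "cycle_on rest c" "set c = rest" "c = c0 # c1 # c2 # c3 # zs"
    and c1: "c1 \<in> via_uv \<union> via_vu" "A c3 c1"
  shows "\<exists>l. rest_path l \<and> hd l = c2 \<and> last l = c0"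
proof -
  let ?q = "c2 # c3 # zs @ [c0]"
  have "cycle_on rest (rotate1 (rotate1 c))" using c(1) by (intro cycle_on_rotate1)
  then have "successively A (?q @ [c1])" "distinct (?q @ [c1])"
    using c(3) unfolding cycle_on_def by simp_all
  then have "successively A ?q" "distinct ?q" "c1 \<notin> set ?q"
    by (auto dest: successively_appendD simp del: append.simps append_assoc)
  then have "is_path V A c2 c0 ?q" "set ?q = rest - {c1}"
    using c(2,3) rest_subset_V unfolding is_path_iff by auto
  moreover have "\<exists>b\<in>set (zs @ [c0]). A c1 b"
  proof (rule ccontr)
    assume no_out: "\<not> ?thesis"
    have "{y\<in>rest. A c1 y} \<subseteq> {c2}"
    proof
      fix y assume "y \<in> {y\<in>rest. A c1 y}"
      then have "y \<in> set c" "y \<noteq> c1" "y \<noteq> c3" "A c1 y"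
        using c(2) c1(2) arc_vertices arc_asym by auto
      then show "y \<in> {c2}" using c(3) no_out by auto
    qed
    then have "card {y\<in>rest. A c1 y} \<le> card {c2}" by (intro card_mono) auto
    then have "card {y\<in>rest. A c1 y} \<le> 1" by simp
    then show False using card_out_within_rest[OF c1(1)] by linarith
  qed
  moreover have "c1 \<in> rest" using c(2,3) by auto
  moreover have "?q = [c2, c3] @ (zs @ [c0])" "\<exists>a\<in>set [c2, c3]. A a c1" using c1(2) by auto
  ultimately show ?thesis by (intro rest_path_by_insertion)
qed

lemma rest_path_skipping_last:
  assumes c: "cycle_on rest c" "set c = rest" "c = c0 # c1 # c2 # ys @ [cl]" "ys \<noteq> []"
    and cl: "cl \<in> via_uv \<union> via_vu" "A c2 cl"
  shows "\<exists>l. rest_path l \<and> hd l = c0 \<and> last l = last ys"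
proof -
  let ?q = "c0 # c1 # c2 # ys"
  have "successively A (?q @ [cl])" "distinct (?q @ [cl])"
    using c(1,3) unfolding cycle_on_def by simp_all
  then have "successively A ?q" "distinct ?q" "cl \<notin> set ?q"
    by (auto dest: successively_appendD simp del: append.simps append_assoc)
  then have "is_path V A c0 (last ys) ?q" "set ?q = rest - {cl}"
    using c(2-4) rest_subset_V unfolding is_path_iff by auto
  moreover have "\<exists>b\<in>set ys. A cl b"
  proof (rule ccontr)
    assume no_out: "\<not> ?thesis"
    have "{y\<in>rest. A cl y} \<subseteq> {c0, c1}"
    proof
      fix y assume "y \<in> {y\<in>rest. A cl y}"
      then have "y \<in> set c" "y \<noteq> cl" "y \<noteq> c2" "A cl y"
        using c(2) cl(2) arc_vertices arc_asym by auto
      then show "y \<in> {c0, c1}" using c(3) no_out by auto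
    qed
    then have "card {y\<in>rest. A cl y} \<le> card {c0, c1}" by (intro card_mono) auto
    also have "\<dots> \<le> 2" by (simp add: card_insert_if)
    finally have "card {y\<in>rest. A cl y} \<le> 2" .
    then show False using card_out_within_rest[OF cl(1)] by linarith
  qed
  moreover have "cl \<in> rest" using c(2,3) by auto
  moreover have "?q = [c0, c1, c2] @ ys" "\<exists>a\<in>set [c0, c1, c2]. A a cl" using cl(2) by auto
  ultimately show ?thesis by (intro rest_path_by_insertion)
qed

lemma links_iff_same_class:
  assumes "common_out = {}" "common_in = {}" and "a \<in> rest" "b \<in> rest"
  shows "links a b \<longleftrightarrow> (a \<in> via_uv \<longleftrightarrow> b \<in> via_uv)"
  using assms rest_eq arc_asym unfolding links_def class_defs by blast

lemma hamiltonian_cycle_rest_shape: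
  assumes "cycle_on rest c" "set c = rest"
  obtains c0 c1 c2 c3 ys cl where "c = c0 # c1 # c2 # c3 # ys @ [cl]"
proof -
  have "distinct c" using assms(1) unfolding cycle_on_def by blast
  then have "length c = card rest" using assms(2) distinct_card by fastforce
  then have "Suc (Suc (Suc (Suc (Suc 0)))) \<le> length c" using card_rest card_V_large by linarith
  then obtain c0 c1 c2 c3 r where "c = c0 # c1 # c2 # c3 # r" "r \<noteq> []"
    by (auto simp: Suc_le_length_iff)
  moreover obtain ys cl where "r = ys @ [cl]" using \<open>r \<noteq> []\<close> by (cases r rule: rev_cases) auto
  ultimately show ?thesis using that by simp
qed

(* Then rest = via_uv \<union> via_vu and consecutive cycle vertices lie in different classes;
   depending on the arcs c1 c3 and c2 cl, one of three reroutings yields a spanning path of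
   rest whose ends are in the same class. *)
lemma spanning_uv_path_if_no_links:
  assumes c: "cycle_on rest c" "set c = rest" and c_eq: "c = c0 # c1 # c2 # c3 # ys @ [cl]"
    and no_link: "successively (\<lambda>a b. \<not> links a b) c" "\<not> links (last c) (hd c)"
  shows "\<exists>p. uv_path p \<and> set p = V"
proof -
  have B_C: "common_out = {}" "common_in = {}" using no_links_classes[OF c no_link] by auto
  then have PQ: "rest = via_uv \<union> via_vu" using rest_eq by simp
  note links_iff = links_iff_same_class[OF B_C]
  have "last (c3 # ys) \<in> set (c3 # ys)" by (rule last_in_set) simp
  then have "{c0, c1, c2, c3, cl, last (c3 # ys)} \<subseteq> set c" unfolding c_eq by auto
  then have in_rest: "c0 \<in> rest" "c1 \<in> rest" "c2 \<in> rest" "c3 \<in> rest" "cl \<in> rest"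
      "last (c3 # ys) \<in> rest"
    using c(2) by auto
  have arcs: "A c0 c1" "A c1 c2" "successively A (c3 # ys @ [cl])" "distinct c"
    using c(1) unfolding c_eq cycle_on_def by auto
  have "successively (\<lambda>a b. \<not> links a b) ((c0 # c1 # c2 # c3 # ys) @ [cl])"
    using no_link(1) unfolding c_eq by simp
  then have "\<not> links (last (c3 # ys)) cl" using successively_append_iff[THEN iffD1] by fastforce
  moreover have "\<not> links c0 c1" "\<not> links c1 c2" "\<not> links cl c0"
    using no_link unfolding c_eq by auto
  ultimately have links02: "links c0 c2" "links c2 c0" and links0l: "links (last (c3 # ys)) c0"
    using links_iff in_rest by blast+
  have mid: "c1 \<in> via_uv \<union> via_vu" "cl \<in> via_uv \<union> via_vu" using in_rest PQ by auto
  have "c1 \<noteq> c3" "c2 \<noteq> cl" using arcs(4) unfolding c_eq by auto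
  then have "A c1 c3 \<or> A c3 c1" "A c2 cl \<or> A cl c2"
    using arc_total in_rest rest_subset_V by (meson subsetD)+
  then consider "A c3 c1" | "A c2 cl" | "A c1 c3" "A cl c2" by blast
  then show ?thesis
  proof cases
    case 1
    then obtain l where "rest_path l" "hd l = c2" "last l = c0"
      using rest_path_skipping_second[OF c c_eq mid(1)] by blast
    then show ?thesis using spanning_uv_path_of_rest_path links02(1) by simp
  next
    case 2
    then obtain l where "rest_path l" "hd l = c0" "last l = last (c3 # ys)"
      using rest_path_skipping_last[OF c, of c0 c1 c2 "c3 # ys" cl] c_eq mid(2) by auto
    then show ?thesis using spanning_uv_path_of_rest_path links0l by simp
  next
    case 3
    have "successively A ((c3 # ys @ [cl]) @ [c2])"
      by (rule successively_append_iff[THEN iffD2]) (use arcs(3) 3(2) in simp)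
    then have "successively A (c0 # c1 # c3 # ys @ [cl, c2])" using arcs(1) 3(1) by simp
    then have "rest_path (c0 # c1 # c3 # ys @ [cl, c2])"
      using c(2) arcs(4) unfolding c_eq rest_path_def by auto
    then show ?thesis using spanning_uv_path_of_rest_path links02(2) by simp
  qed
qed

lemma spanning_uv_path: "\<exists>p. uv_path p \<and> set p = V"
proof -
  obtain c where c: "cycle_on rest c" "set c = rest" using hamiltonian_cycle_rest by blast
  show ?thesis
  proof (cases "links (last c) (hd c)")
    case True
    have "rest_path c" using c unfolding cycle_on_def rest_path_def by auto
    then show ?thesis using spanning_uv_path_of_rest_path True by blast
  next
    case False
    show ?thesis
    proof (cases "\<exists>l1 l2. c = l1 @ l2 \<and> l1 \<noteq> [] \<and> l2 \<noteq> [] \<and> links (last l1) (hd l2)")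
      case True
      then show ?thesis using spanning_uv_path_of_linked_cut[OF c] by blast
    next
      case no_cut: False
      then have "successively (\<lambda>a b. \<not> links a b) c" by (intro successively_of_all_splits) blast
      moreover obtain c0 c1 c2 c3 ys cl where "c = c0 # c1 # c2 # c3 # ys @ [cl]"
        using hamiltonian_cycle_rest_shape[OF c] .
      ultimately show ?thesis using spanning_uv_path_if_no_links[OF c _ _ False] by blast
    qed
  qed
qed

lemma weak_container_1: "\<exists>Ps. weak_container V A 1 u v Ps"
proof -
  obtain p where "uv_path p" "set p = V" using spanning_uv_path by blast
  then have "weak_container V A 1 u v [p]" unfolding weak_container_def uv_path_def by auto
  then show ?thesis by blast
qed

end

lemma weak_container_sym: "weak_container V A \<omega> a b Ps \<Longrightarrow> weak_container V A \<omega> b a Ps"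
  unfolding weak_container_def by blast

theorem theorem4p3:
  fixes V :: "'a set" and A :: "'a \<Rightarrow> 'a \<Rightarrow> bool" and k t :: nat
  assumes "tournament V A"
    and "t \<ge> 2"
    and "irregularity V A \<le> k"
    and "card V \<ge> 6 * t + 5 * k - 3"
  shows "\<forall>\<omega>. 1 \<le> \<omega> \<and> \<omega> \<le> t + 1 \<longrightarrow> weakly_connected_star V A \<omega>"
proof (intro allI impI)
  fix \<omega> :: nat assume \<omega>: "1 \<le> \<omega> \<and> \<omega> \<le> t + 1"
  interpret near_regular_tournament V A k
    using assms(1,3) by unfold_locales
  have container: "\<exists>Ps. weak_container V A \<omega> a b Ps" if "A a b" for a b
  proof -
    have "5 * k + 9 \<le> card V" using assms(2,4) by linarith
    then interpret arc_split V A k a b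
      using that by unfold_locales
    show ?thesis
      using weak_container_1 weak_container_at_least_2[of \<omega>] \<omega> assms(2,4)
      by (cases "\<omega> = 1") auto
  qed
  show "weakly_connected_star V A \<omega>"
    unfolding weakly_connected_star_def
    using container arc_total weak_container_sym by metis
qed

end
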